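(* Let $f:\mathbb{R}^d\to\mathbb{R}$ be differentiable with minimum value $f^\ast$ and let $L>0$, $\mu>0$, $\tau\in(0,1]$, $\rho\ge 1$. Assume: (L-smooth) $f(x)-f(y)-\langle\nabla f(y),x-y\rangle\le \frac{L}{2}\|x-y\|^2$ for all $x,y\in\mathbb{R}^d$; (SQC) there is a minimizer $x^\ast$ of $f$ such that $f^\ast\ge f(x)+\frac{1}{\tau}\langle\nabla f(x),x^\ast-x\rangle+\frac{\mu}{2}\|x-x^\ast\|^2$ for all $x\in\mathbb{R}^d$; (SGC) the stochastic gradient oracle satisfies $\mathbb{E}_\xi[\nabla f(x,\xi)]=\nabla f(x)$ and $\mathbb{E}_\xi[\|\nabla f(x,\xi)\|^2]\le\rho\|\nabla f(x)\|^2$ for all $x\in\mathbb{R}^d$. Let $\varepsilon\in(0,1)$ with $\varepsilon\ge(\mu/L)^{1/4}$, and run the continuized Nesterov algorithm (defined in the context) with parameters $\eta'=\frac{(1-\varepsilon)\tau}{\rho}\sqrt{\frac{1}{2(2-\tau)}}\sqrt{\frac{\mu}{L}}$, $\eta=\frac{1}{\rho}\sqrt{\frac{2}{2-\tau}}\sqrt{\frac{\mu}{L}}$, $\gamma'=\frac{1}{\rho}\sqrt{\frac{2-\tau}{2\mu L}}$, $\gamma=\frac{1}{\rho L}$. Then for every $k\in\mathbb{N}$, $$\mathbb{E}\Big[e^{\frac{(1-\varepsilon)\tau}{\rho}\sqrt{\frac{2}{2-\tau}}\sqrt{\frac{\mu}{L}}\,T_k}\big(f(\tilde x_k)-f^\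ast\big)\Big]\le\frac{1}{\varepsilon}\big(f(x_0)-f^\ast+\mu\|x_0-x^\ast\|^2\big).$$
   Context: Stochastic gradients: $(\Xi,\mathcal{P})$ is a probability space and $\nabla f(x,\xi)$, $x\in\mathbb{R}^d$, $\xi\in\Xi$, is a measurable stochastic estimate of $\nabla f(x)$; $\mathbb{E}_\xi$ denotes integration in $\xi\sim\mathcal{P}$. Continuized Nesterov algorithm with parameters $(\eta,\eta',\gamma,\gamma')$, $\eta+\eta'>0$: let $T_0=0$ and let $T_{k+1}-T_k$, $k\ge0$, be i.i.d. exponential random variables with parameter $1$; let $\xi_1,\xi_2,\dots$ be i.i.d. with law $\mathcal{P}$, independent of the $T_k$. Given a deterministic $x_0\in\mathbb{R}^d$, set $\tilde x_0=\tilde z_0=x_0$ and, writing $\Delta_k=T_{k+1}-T_k$, for $k\ge0$: $\tilde y_k=\tilde x_k+\frac{\eta}{\eta+\eta'}\big(1-e^{-(\eta+\eta')\Delta_k}\big)(\tilde z_k-\tilde x_k)$, $\tilde x_{k+1}=\tilde y_k-\gamma\nabla f(\tilde y_k,\xi_{k+1})$, $\tilde z_{k+1}=\tilde z_k+\eta'\frac{1-e^{-(\eta+\eta')\Delta_k}}{\eta'+\eta e^{-(\eta+\eta')\Delta_k}}(\tilde y_k-\tilde z_k)-\gamma'\nabla f(\tilde y_k,\xi_{k+1})$. *)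

theory Defs
  imports "HOL-Probability.Probability"
begin

definition step_law :: "'b measure \<Rightarrow> (real \<times> 'b) measure" where
  "step_law P = density lborel (exponential_density 1) \<Otimes>\<^sub>M P"

text \<open>Underlying probability space: omega k = (Delta_k, xi_(k+1)), all i.i.d.\<close>
definition cn_space :: "'b measure \<Rightarrow> (nat \<Rightarrow> real \<times> 'b) measure" where
  "cn_space P = (\<Pi>\<^sub>M k\<in>UNIV. step_law P)"

definition cn_T :: "nat \<Rightarrow> (nat \<Rightarrow> real \<times> 'b) \<Rightarrow> real" where
  "cn_T k \<omega> = (\<Sum>i<k. fst (\<omega> i))"

fun cn_iter :: "real \<Rightarrow> real \<Rightarrow> real \<Rightarrow> real \<Rightarrow> ('a::real_vector \<Rightarrow> 'b \<Rightarrow> 'a)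
    \<Rightarrow> 'a \<Rightarrow> nat \<Rightarrow> (nat \<Rightarrow> real \<times> 'b) \<Rightarrow> 'a \<times> 'a" where
  "cn_iter eta eta' gamma gamma' g x0 0 \<omega> = (x0, x0)"
| "cn_iter eta eta' gamma gamma' g x0 (Suc k) \<omega> =
     (let (x, z) = cn_iter eta eta' gamma gamma' g x0 k \<omega>;
          D = fst (\<omega> k); xi = snd (\<omega> k);
          e = exp (- (eta + eta') * D);
          y = x + (eta / (eta + eta') * (1 - e)) *\<^sub>R (z - x);
          gr = g y xi
      in (y - gamma *\<^sub>R gr,
          z + (eta' * (1 - e) / (eta' + eta * e)) *\<^sub>R (y - z) - gamma' *\<^sub>R gr))"

end

theory Submission
  imports Defs "HOL-Real_Asymp.Real_Asymp"
begin

(*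
  The proof is a Lyapunov argument for the continuized process.  Between two events the iterates
  follow the linear mixing flow x' = eta (z - x), z' = eta' (x - z); at an event they take a
  stochastic gradient step.  For V (x, z) = f x - fstar + B |z - xstar|^2 + D |x - xstar|^2 with
  B = mu / (2 - tau) and D = - (1 - eps) tau B / 2, smoothness, unbiasedness and the strong growth
  condition bound the expected value of V after a gradient step at (y, z) by
  (1 - alpha) V (y, z) - dV/dt, where dV/dt is the derivative along the flow and SQC is used to
  make the bound nonnegative.  Since e^(-t) e^(alpha t) ((1 - alpha) V - dV/dt) is the derivative of
  - e^((alpha - 1) t) V along the flow, integrating against the exponential law of the waiting time
  gives E [e^(alpha Delta) V (next state)] <= V (current state).  Iterating on the product space
  yields E [e^(alpha T_k) V (x_k, z_k)] <= V (x0, x0) <= f x0 - fstar + mu |x0 - xstar|^2.  Finally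
  SQC implies quadratic growth, f x - fstar >= tau mu / (2 (2 - tau)) |x - xstar|^2, which gives
  V >= eps (f x - fstar).
*)

section \<open>Quadratic growth under strong quasi-convexity\<close>

lemma has_real_derivative_gradient_comp:
  fixes f :: "'a::euclidean_space \<Rightarrow> real"
  assumes f: "(f has_derivative (\<lambda>h. d \<bullet> h)) (at (p t))"
    and p: "(p has_vector_derivative p') (at t)"
  shows "((\<lambda>t. f (p t)) has_real_derivative (d \<bullet> p')) (at t)"
proof -
  have "((\<lambda>t. f (p t)) has_derivative (\<lambda>h. d \<bullet> (h *\<^sub>R p'))) (at t)"
    using has_derivative_compose[OF p[unfolded has_vector_derivative_def] f] .
  then show ?thesis
    by (rule has_derivative_imp_has_field_derivative) (simp add: mult.commute)
qed

lemma has_real_derivative_norm_diff_power2: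
  fixes p :: "real \<Rightarrow> 'a::real_inner"
  assumes "(p has_vector_derivative p') (at t)"
  shows "((\<lambda>t. (norm (p t - c))\<^sup>2) has_real_derivative 2 * ((p t - c) \<bullet> p')) (at t)"
proof -
  have "((\<lambda>t. p t - c) has_derivative (\<lambda>h. h *\<^sub>R p')) (at t)"
    using assms by (auto simp: has_vector_derivative_def intro!: derivative_eq_intros)
  from has_derivative_inner[OF this this] show ?thesis
    unfolding power2_norm_eq_inner
    by (rule has_derivative_imp_has_field_derivative) (simp add: inner_commute algebra_simps)
qed

lemma lower_bound_of_differential_inequality:
  fixes h h' :: "real \<Rightarrow> real"
  assumes deriv: "\<And>t. 0 < t \<Longrightarrow> t \<le> 1 \<Longrightarrow> (h has_real_derivative h' t) (at t)"
    and ineq: "\<And>t. 0 < t \<Longrightarrow> t \<le> 1 \<Longrightarrow> \<tau> * h t + (2 - \<tau>) * c * t\<^sup>2 \<le> t * h' t"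
    and nonneg: "\<And>t. 0 < t \<Longrightarrow> t \<le> 1 \<Longrightarrow> 0 \<le> h t"
    and "\<tau> < 2" "0 \<le> c"
  shows "c \<le> h 1"
proof -
  \<comment> \<open>the differential inequality says exactly that \<open>k\<close> is nondecreasing on \<open>(0, 1]\<close>\<close>
  define k where "k t = t powr (- \<tau>) * h t - c * t powr (2 - \<tau>)" for t
  have k_deriv: "(k has_real_derivative t powr (- \<tau> - 1) * (t * h' t - \<tau> * h t - (2 - \<tau>) * c * t\<^sup>2)) (at t)"
    if "0 < t" "t \<le> 1" for t
  proof -
    have "(k has_real_derivative
        t powr (- \<tau>) * h' t - \<tau> * t powr (- \<tau> - 1) * h t - c * ((2 - \<tau>) * t powr (1 - \<tau>))) (at t)"
      unfolding k_def using that
      by (auto intro!: derivative_eq_intros deriv simp: algebra_simps)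
    moreover have "t powr (- \<tau>) = t powr (- \<tau> - 1) * t" "t powr (1 - \<tau>) = t powr (- \<tau> - 1) * t\<^sup>2"
      using powr_mult_base[of t "- \<tau> - 1"] powr_mult_base[of t "- \<tau>"] that
      by (simp_all add: power2_eq_square mult_ac)
    ultimately show ?thesis
      by (simp add: algebra_simps)
  qed
  have k_mono: "k s \<le> k 1" if "0 < s" "s \<le> 1" for s
  proof (rule DERIV_nonneg_imp_nondecreasing[OF that(2)])
    fix t assume "s \<le> t" "t \<le> 1"
    with that have "0 < t" by simp
    with \<open>t \<le> 1\<close> ineq[of t] k_deriv[of t]
    show "\<exists>y. (k has_real_derivative y) (at t) \<and> 0 \<le> y"
      by (intro exI conjI) auto
  qed
  have "c - c * s powr (2 - \<tau>) \<le> h 1" if "0 < s" "s \<le> 1" for s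
  proof -
    have "0 \<le> s powr (- \<tau>) * h s"
      using nonneg[OF that] by simp
    then show ?thesis
      using k_mono[OF that] by (simp add: k_def)
  qed
  moreover have near_0: "\<forall>\<^sub>F s in at_right 0. 0 < s \<and> s \<le> (1::real)"
    unfolding eventually_at_right_field by (intro exI[of _ 1]) auto
  moreover have "((\<lambda>s. c - c * s powr (2 - \<tau>)) \<longlongrightarrow> c - c * 0) (at_right 0)"
    using \<open>\<tau> < 2\<close> near_0
    by (intro tendsto_intros tendsto_zero_powrI) (auto elim: eventually_mono)
  ultimately show ?thesis
    by (intro tendsto_upperbound[where F = "at_right 0"]) (auto elim: eventually_mono)
qed

lemma quadratic_growth_of_SQC:
  fixes f :: "'a::euclidean_space \<Rightarrow> real"
  assumes grad: "\<And>x. (f has_derivative (\<lambda>h. df x \<bullet> h)) (at x)"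
    and fmin: "\<And>x. fstar \<le> f x"
    and SQC: "\<And>x. fstar \<ge> f x + (1 / \<tau>) * (df x \<bullet> (xstar - x)) + \<mu> / 2 * (norm (x - xstar))\<^sup>2"
    and "0 < \<tau>" "\<tau> < 2" "0 \<le> \<mu>"
  shows "\<tau> * \<mu> / (2 * (2 - \<tau>)) * (norm (x - xstar))\<^sup>2 \<le> f x - fstar"
proof -
  define w where "w = x - xstar"
  define p where "p t = xstar + t *\<^sub>R w" for t
  have p_deriv: "(p has_vector_derivative w) (at t)" for t
    unfolding p_def by (auto intro!: derivative_eq_intros)
  have "\<tau> * \<mu> / (2 * (2 - \<tau>)) * (norm w)\<^sup>2 \<le> f (p 1) - fstar"
  proof (rule lower_bound_of_differential_inequality
      [where h = "\<lambda>t. f (p t) - fstar" and h' = "\<lambda>t. df (p t) \<bullet> w" and \<tau> = \<tau>])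
    fix t :: real assume "0 < t"
    show "((\<lambda>t. f (p t) - fstar) has_real_derivative df (p t) \<bullet> w) (at t)"
      by (auto intro!: derivative_eq_intros has_real_derivative_gradient_comp grad p_deriv)
    have "df (p t) \<bullet> (xstar - p t) = - t * (df (p t) \<bullet> w)" "norm (p t - xstar) = t * norm w"
      using \<open>0 < t\<close> by (simp_all add: p_def)
    with SQC[of "p t"] \<open>0 < \<tau>\<close>
    have SQC_t: "\<tau> * (f (p t) - fstar) + \<tau> * \<mu> / 2 * (t\<^sup>2 * (norm w)\<^sup>2) \<le> t * (df (p t) \<bullet> w)"
      by (simp add: field_simps power_mult_distrib)
    have c: "(2 - \<tau>) * (\<tau> * \<mu> / (2 * (2 - \<tau>)) * (norm w)\<^sup>2) * t\<^sup>2 = \<tau> * \<mu> / 2 * (t\<^sup>2 * (norm w)\<^sup>2)"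
      using \<open>\<tau> < 2\<close> by (simp add: field_simps)
    show "\<tau> * (f (p t) - fstar) + (2 - \<tau>) * (\<tau> * \<mu> / (2 * (2 - \<tau>)) * (norm w)\<^sup>2) * t\<^sup>2
        \<le> t * (df (p t) \<bullet> w)"
      unfolding c by (rule SQC_t)
    show "0 \<le> f (p t) - fstar" using fmin by simp
  qed (use assms in \<open>auto intro: divide_nonneg_pos\<close>)
  moreover have "p 1 = x"
    by (simp add: p_def w_def)
  ultimately show ?thesis
    by (simp add: w_def)
qed

section \<open>The mixing flow between two events\<close>

text \<open>\<open>(mix_x eta eta' x z t, mix_z eta eta' x z t)\<close> solves \<open>x' = eta (z - x)\<close>,
  \<open>z' = eta' (x - z)\<close> with initial value \<open>(x, z)\<close>; the algorithm evaluates it at the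
  waiting time \<open>Delta_k\<close> (lemma \<open>cn_step_mix\<close>).\<close>

definition mix_weight :: "real \<Rightarrow> real \<Rightarrow> real" where
  "mix_weight a t = (1 - exp (- a * t)) / a"

definition mix_x :: "real \<Rightarrow> real \<Rightarrow> 'a::real_vector \<Rightarrow> 'a \<Rightarrow> real \<Rightarrow> 'a" where
  "mix_x eta eta' x z t = x + (eta * mix_weight (eta + eta') t) *\<^sub>R (z - x)"

definition mix_z :: "real \<Rightarrow> real \<Rightarrow> 'a::real_vector \<Rightarrow> 'a \<Rightarrow> real \<Rightarrow> 'a" where
  "mix_z eta eta' x z t = z - (eta' * mix_weight (eta + eta') t) *\<^sub>R (z - x)"

lemma mix_weight_0 [simp]: "mix_weight a 0 = 0"
  by (simp add: mix_weight_def)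

lemma one_minus_mix_weight: "a \<noteq> 0 \<Longrightarrow> 1 - a * mix_weight a t = exp (- a * t)"
  by (simp add: mix_weight_def)

lemma mix_weight_has_real_derivative:
  "a \<noteq> 0 \<Longrightarrow> (mix_weight a has_real_derivative exp (- a * t)) (at t)"
  unfolding mix_weight_def[abs_def] by (auto intro!: derivative_eq_intros simp: field_simps)

lemma mix_weight_tendsto:
  assumes "a > 0"
  shows "(mix_weight a \<longlongrightarrow> 1 / a) at_top"
proof -
  have "((\<lambda>t. exp (- a * t)) \<longlongrightarrow> 0) at_top"
    using assms by real_asymp
  then have "((\<lambda>t. (1 - exp (- a * t)) / a) \<longlongrightarrow> (1 - 0) / a) at_top"
    using assms by (intro tendsto_intros) auto
  then show ?thesis
    by (simp add: mix_weight_def[abs_def])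
qed

lemma mix_z_minus_mix_x:
  assumes "eta + eta' \<noteq> 0"
  shows "mix_z eta eta' x z t - mix_x eta eta' x z t = exp (- (eta + eta') * t) *\<^sub>R (z - x)"
proof -
  have "mix_z eta eta' x z t - mix_x eta eta' x z t = (1 - (eta + eta') * mix_weight (eta + eta') t) *\<^sub>R (z - x)"
    by (simp add: mix_x_def mix_z_def algebra_simps)
  then show ?thesis
    by (simp add: one_minus_mix_weight[OF assms])
qed

lemma mix_x_has_vector_derivative:
  assumes "eta + eta' \<noteq> 0"
  shows "(mix_x eta eta' x z has_vector_derivative eta *\<^sub>R (mix_z eta eta' x z t - mix_x eta eta' x z t)) (at t)"
  unfolding mix_z_minus_mix_x[OF assms] unfolding mix_x_def[abs_def]
  by (auto intro!: derivative_eq_intros mix_weight_has_real_derivative assms)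

lemma mix_z_has_vector_derivative:
  assumes "eta + eta' \<noteq> 0"
  shows "(mix_z eta eta' x z has_vector_derivative eta' *\<^sub>R (mix_x eta eta' x z t - mix_z eta eta' x z t)) (at t)"
proof -
  have "((\<lambda>t. eta' * mix_weight (eta + eta') t) has_real_derivative eta' * exp (- (eta + eta') * t)) (at t)"
    by (intro DERIV_cmult mix_weight_has_real_derivative assms)
  from has_vector_derivative_diff[OF has_vector_derivative_const has_vector_derivative_scaleR[OF this has_vector_derivative_const]]
  have "(mix_z eta eta' x z has_vector_derivative
      0 - ((eta' * mix_weight (eta + eta') t) *\<^sub>R 0 + (eta' * exp (- (eta + eta') * t)) *\<^sub>R (z - x))) (at t)"
    unfolding mix_z_def[abs_def] .
  moreover have "mix_x eta eta' x z t - mix_z eta eta' x z t = - (exp (- (eta + eta') * t) *\<^sub>R (z - x))"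
    unfolding mix_z_minus_mix_x[OF assms, symmetric] by (rule minus_diff_eq[symmetric])
  ultimately show ?thesis
    by (simp only: scaleR_zero_right add_0_left diff_0 scaleR_minus_right scaleR_scaleR)
qed

lemma mix_x_0 [simp]: "mix_x eta eta' x z 0 = x" and mix_z_0 [simp]: "mix_z eta eta' x z 0 = z"
  by (simp_all add: mix_x_def mix_z_def)

lemma mix_x_tendsto:
  fixes x z :: "'a::real_normed_vector"
  assumes "eta + eta' > 0"
  shows "(mix_x eta eta' x z \<longlongrightarrow> x + (eta / (eta + eta')) *\<^sub>R (z - x)) at_top"
proof -
  have "((\<lambda>t. eta * mix_weight (eta + eta') t) \<longlongrightarrow> eta / (eta + eta')) at_top"
    using tendsto_mult_left[OF mix_weight_tendsto[OF assms], of eta] by simp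
  from tendsto_add[OF tendsto_const tendsto_scaleR[OF this tendsto_const]] show ?thesis
    unfolding mix_x_def[abs_def] .
qed

lemma mix_z_tendsto:
  fixes x z :: "'a::real_normed_vector"
  assumes "eta + eta' > 0"
  shows "(mix_z eta eta' x z \<longlongrightarrow> z - (eta' / (eta + eta')) *\<^sub>R (z - x)) at_top"
proof -
  have "((\<lambda>t. eta' * mix_weight (eta + eta') t) \<longlongrightarrow> eta' / (eta + eta')) at_top"
    using tendsto_mult_left[OF mix_weight_tendsto[OF assms], of eta'] by simp
  from tendsto_diff[OF tendsto_const tendsto_scaleR[OF this tendsto_const]] show ?thesis
    unfolding mix_z_def[abs_def] .
qed

definition cn_step :: "real \<Rightarrow> real \<Rightarrow> real \<Rightarrow> real \<Rightarrow> ('a::real_vector \<Rightarrow> 'b \<Rightarrow> 'a)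
    \<Rightarrow> 'a \<times> 'a \<Rightarrow> real \<times> 'b \<Rightarrow> 'a \<times> 'a" where
  "cn_step eta eta' gamma gamma' g s w =
     (let x = fst s; z = snd s; D = fst w; xi = snd w;
          e = exp (- (eta + eta') * D);
          y = x + (eta / (eta + eta') * (1 - e)) *\<^sub>R (z - x);
          gr = g y xi
      in (y - gamma *\<^sub>R gr,
          z + (eta' * (1 - e) / (eta' + eta * e)) *\<^sub>R (y - z) - gamma' *\<^sub>R gr))"

lemma cn_iter_Suc_cn_step:
  "cn_iter eta eta' gamma gamma' g x0 (Suc k) \<omega> =
     cn_step eta eta' gamma gamma' g (cn_iter eta eta' gamma gamma' g x0 k \<omega>) (\<omega> k)"
  by (simp add: cn_step_def Let_def split: prod.splits)

lemma z_update_eq_mix_z: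
  assumes "0 < eta" "0 < eta'" and e: "e = exp (- (eta + eta') * t)"
  shows "z + (eta' * (1 - e) / (eta' + eta * e)) *\<^sub>R (mix_x eta eta' x z t - z) = mix_z eta eta' x z t"
proof -
  define a where "a = eta + eta'"
  have "0 < eta' + eta * e" "a \<noteq> 0"
    using assms by (simp_all add: a_def add_pos_nonneg)
  have w: "mix_weight (eta + eta') t = (1 - e) / a"
    by (simp add: mix_weight_def e a_def)
  have "1 - eta * ((1 - e) / a) = (eta' + eta * e) / a"
    using \<open>a \<noteq> 0\<close> by (simp add: field_simps a_def)
  moreover have "x + c *\<^sub>R (z - x) - z = (1 - c) *\<^sub>R (x - z)" for c
    by (simp add: scaleR_diff_left scaleR_diff_right algebra_simps)
  ultimately have "mix_x eta eta' x z t - z = ((eta' + eta * e) / a) *\<^sub>R (x - z)"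
    by (simp add: mix_x_def w)
  then have "z + (eta' * (1 - e) / (eta' + eta * e)) *\<^sub>R (mix_x eta eta' x z t - z)
      = z + (eta' * (1 - e) / (eta' + eta * e) * ((eta' + eta * e) / a)) *\<^sub>R (x - z)"
    by simp
  also have "\<dots> = z + (eta' * ((1 - e) / a)) *\<^sub>R (x - z)"
    using \<open>0 < eta' + eta * e\<close> by simp
  also have "\<dots> = mix_z eta eta' x z t"
    by (simp add: mix_z_def w scaleR_diff_right)
  finally show ?thesis .
qed

lemma cn_step_mix:
  assumes "0 < eta" "0 < eta'"
  shows "cn_step eta eta' gamma gamma' g (x, z) (t, \<xi>) =
    (let y = mix_x eta eta' x z t in
     (y - gamma *\<^sub>R g y \<xi>, mix_z eta eta' x z t - gamma' *\<^sub>R g y \<xi>))"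
proof -
  define e where "e = exp (- (eta + eta') * t)"
  have y: "x + (eta / (eta + eta') * (1 - e)) *\<^sub>R (z - x) = mix_x eta eta' x z t"
    by (simp add: mix_x_def mix_weight_def e_def)
  have "cn_step eta eta' gamma gamma' g (x, z) (t, \<xi>) =
    (let y = x + (eta / (eta + eta') * (1 - e)) *\<^sub>R (z - x) in
     (y - gamma *\<^sub>R g y \<xi>, z + (eta' * (1 - e) / (eta' + eta * e)) *\<^sub>R (y - z) - gamma' *\<^sub>R g y \<xi>))"
    by (simp add: cn_step_def e_def Let_def)
  then show ?thesis
    by (simp only: Let_def y z_update_eq_mix_z[OF assms e_def])
qed

section \<open>The continuized process on the product space\<close>

lemma sets_step_law: "sets (step_law P) = sets (borel \<Otimes>\<^sub>M P)"
  unfolding step_law_def by (intro sets_pair_measure_cong) auto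

lemma prob_space_step_law: "prob_space P \<Longrightarrow> prob_space (step_law P)"
  unfolding step_law_def by (intro prob_space_pair prob_space_exponential_density) auto

lemma measurable_fst_step_law [measurable]: "fst \<in> borel_measurable (step_law P)"
  unfolding measurable_cong_sets[OF sets_step_law refl] by (rule measurable_fst)

lemma measurable_cn_step:
  fixes g :: "'a::euclidean_space \<Rightarrow> 'b \<Rightarrow> 'a"
  assumes [measurable]: "(\<lambda>(x, \<xi>). g x \<xi>) \<in> borel_measurable (borel \<Otimes>\<^sub>M P)"
  shows "(\<lambda>(s, w). cn_step eta eta' gamma gamma' g s w) \<in> borel_measurable (borel \<Otimes>\<^sub>M step_law P)"
  unfolding borel_prod[symmetric] measurable_cong_sets[OF sets_pair_measure_cong[OF refl sets_step_law] refl]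
    cn_step_def Let_def
  by measurable

lemma measurable_cn_iter:
  fixes g :: "'a::euclidean_space \<Rightarrow> 'b \<Rightarrow> 'a"
  assumes "(\<lambda>(x, \<xi>). g x \<xi>) \<in> borel_measurable (borel \<Otimes>\<^sub>M P)" and "{..<k} \<subseteq> J"
  shows "cn_iter eta eta' gamma gamma' g x0 k \<in> borel_measurable (\<Pi>\<^sub>M j\<in>J. step_law P)"
  using assms(2)
proof (induction k)
  case 0
  have "cn_iter eta eta' gamma gamma' g x0 0 = (\<lambda>_. (x0, x0))"
    by (rule ext) simp
  then show ?case
    by simp
next
  case (Suc k)
  then have "k \<in> J" "{..<k} \<subseteq> J"
    by auto
  with Suc.IH have [measurable]: "cn_iter eta eta' gamma gamma' g x0 k \<in> borel_measurable (\<Pi>\<^sub>M j\<in>J. step_law P)"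
    by simp
  have "(\<lambda>\<omega>. (cn_iter eta eta' gamma gamma' g x0 k \<omega>, \<omega> k))
      \<in> measurable (\<Pi>\<^sub>M j\<in>J. step_law P) (borel \<Otimes>\<^sub>M step_law P)"
    by measurable (fact \<open>k \<in> J\<close>)
  from measurable_compose[OF this measurable_cn_step[OF assms(1)]] show ?case
    by (simp add: cn_iter_Suc_cn_step[abs_def])
qed

lemma measurable_cn_T: "{..<k} \<subseteq> J \<Longrightarrow> cn_T k \<in> borel_measurable (\<Pi>\<^sub>M j\<in>J. step_law P)"
  unfolding cn_T_def[abs_def] by measurable auto

lemma cn_iter_cong:
  "(\<And>i. i < k \<Longrightarrow> \<omega> i = \<omega>' i) \<Longrightarrow>
    cn_iter eta eta' gamma gamma' g x0 k \<omega> = cn_iter eta eta' gamma gamma' g x0 k \<omega>'"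
  by (induction k) (simp_all add: cn_iter_Suc_cn_step)

lemma cn_T_cong: "(\<And>i. i < k \<Longrightarrow> \<omega> i = \<omega>' i) \<Longrightarrow> cn_T k \<omega> = cn_T k \<omega>'"
  unfolding cn_T_def by (intro sum.cong) auto

lemma cn_T_Suc: "cn_T (Suc k) \<omega> = cn_T k \<omega> + fst (\<omega> k)"
  unfolding cn_T_def by simp

lemma nn_integral_cn_space_eq_PiM_lessThan:
  assumes "prob_space P"
    and F: "F \<in> borel_measurable (\<Pi>\<^sub>M j\<in>{..<k}. step_law P)"
    and local: "\<And>\<omega>. F (restrict \<omega> {..<k}) = F \<omega>"
  shows "(\<integral>\<^sup>+\<omega>. F \<omega> \<partial>cn_space P) = (\<integral>\<^sup>+\<omega>. F \<omega> \<partial>(\<Pi>\<^sub>M j\<in>{..<k}. step_law P))"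
proof -
  interpret step: prob_space "step_law P"
    using prob_space_step_law[OF assms(1)] .
  interpret product_prob_space "\<lambda>_. step_law P" UNIV
    by unfold_locales
  have restrict: "(\<lambda>\<omega>. restrict \<omega> {..<k}) \<in> measurable (cn_space P) (\<Pi>\<^sub>M j\<in>{..<k}. step_law P)"
    unfolding cn_space_def by (rule measurable_restrict_subset) simp
  have "(\<integral>\<^sup>+\<omega>. F \<omega> \<partial>cn_space P) = (\<integral>\<^sup>+\<omega>. F (restrict \<omega> {..<k}) \<partial>cn_space P)"
    by (simp add: local)
  also have "\<dots> = (\<integral>\<^sup>+\<omega>. F \<omega> \<partial>distr (cn_space P) (\<Pi>\<^sub>M j\<in>{..<k}. step_law P) (\<lambda>\<omega>. restrict \<omega> {..<k}))"
    using F by (intro nn_integral_distr[symmetric] restrict) simp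
  also have "\<dots> = (\<integral>\<^sup>+\<omega>. F \<omega> \<partial>(\<Pi>\<^sub>M j\<in>{..<k}. step_law P))"
    unfolding cn_space_def by (subst distr_PiM_restrict_finite) auto
  finally show ?thesis .
qed

lemma nn_integral_cn_iter_Suc_le:
  fixes g :: "'a::euclidean_space \<Rightarrow> 'b \<Rightarrow> 'a" and V :: "'a \<times> 'a \<Rightarrow> real"
  assumes g_meas: "(\<lambda>(x, \<xi>). g x \<xi>) \<in> borel_measurable (borel \<Otimes>\<^sub>M P)"
    and V_meas [measurable]: "V \<in> borel_measurable borel"
    and step: "\<And>s. (\<integral>\<^sup>+w. ennreal (exp (a * fst w) * V (cn_step eta eta' gamma gamma' g s w)) \<partial>step_law P)
      \<le> ennreal (V s)"
  shows "(\<integral>\<^sup>+y. ennreal (exp (a * cn_T (Suc k) (x(k := y)))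
        * V (cn_iter eta eta' gamma gamma' g x0 (Suc k) (x(k := y)))) \<partial>step_law P)
    \<le> ennreal (exp (a * cn_T k x) * V (cn_iter eta eta' gamma gamma' g x0 k x))"
proof -
  let ?X = "cn_iter eta eta' gamma gamma' g x0 k x"
  have "ennreal (exp (a * cn_T (Suc k) (x(k := y))) * V (cn_iter eta eta' gamma gamma' g x0 (Suc k) (x(k := y))))
      = ennreal (exp (a * cn_T k x)) * ennreal (exp (a * fst y) * V (cn_step eta eta' gamma gamma' g ?X y))" for y
  proof -
    have "cn_iter eta eta' gamma gamma' g x0 k (x(k := y)) = ?X" "cn_T k (x(k := y)) = cn_T k x"
      by (auto intro: cn_iter_cong cn_T_cong)
    then show ?thesis
      by (simp add: cn_iter_Suc_cn_step cn_T_Suc distrib_left exp_add mult.assoc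
          del: cn_iter.simps flip: ennreal_mult')
  qed
  then have "(\<integral>\<^sup>+y. ennreal (exp (a * cn_T (Suc k) (x(k := y)))
        * V (cn_iter eta eta' gamma gamma' g x0 (Suc k) (x(k := y)))) \<partial>step_law P)
      = ennreal (exp (a * cn_T k x))
        * (\<integral>\<^sup>+w. ennreal (exp (a * fst w) * V (cn_step eta eta' gamma gamma' g ?X w)) \<partial>step_law P)"
    using measurable_cn_step[OF g_meas, of eta eta' gamma gamma'] by (simp add: nn_integral_cmult)
  also have "\<dots> \<le> ennreal (exp (a * cn_T k x)) * ennreal (V ?X)"
    by (intro mult_left_mono step) simp
  also have "\<dots> = ennreal (exp (a * cn_T k x) * V ?X)"
    by (simp add: ennreal_mult')
  finally show ?thesis .
qed

lemma nn_integral_cn_iter_le: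
  fixes g :: "'a::euclidean_space \<Rightarrow> 'b \<Rightarrow> 'a" and V :: "'a \<times> 'a \<Rightarrow> real"
  assumes P_prob: "prob_space P"
    and g_meas: "(\<lambda>(x, \<xi>). g x \<xi>) \<in> borel_measurable (borel \<Otimes>\<^sub>M P)"
    and V_meas [measurable]: "V \<in> borel_measurable borel"
    and step: "\<And>s. (\<integral>\<^sup>+w. ennreal (exp (a * fst w) * V (cn_step eta eta' gamma gamma' g s w)) \<partial>step_law P)
      \<le> ennreal (V s)"
  shows "(\<integral>\<^sup>+\<omega>. ennreal (exp (a * cn_T k \<omega>) * V (cn_iter eta eta' gamma gamma' g x0 k \<omega>)) \<partial>cn_space P)
    \<le> ennreal (V (x0, x0))"
proof -
  interpret step: prob_space "step_law P"
    using prob_space_step_law[OF P_prob] .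
  interpret product: product_prob_space "\<lambda>_. step_law P" UNIV
    by unfold_locales
  define F where "F k \<omega> = ennreal (exp (a * cn_T k \<omega>) * V (cn_iter eta eta' gamma gamma' g x0 k \<omega>))" for k \<omega>
  have F_meas: "F k \<in> borel_measurable (\<Pi>\<^sub>M j\<in>J. step_law P)" if "{..<k} \<subseteq> J" for k J
    using measurable_cn_iter[OF g_meas that] measurable_cn_T[OF that] unfolding F_def by measurable
  have "(\<integral>\<^sup>+\<omega>. F k \<omega> \<partial>(\<Pi>\<^sub>M j\<in>{..<k}. step_law P)) \<le> ennreal (V (x0, x0))" for k
  proof (induction k)
    case 0
    interpret prob_space "\<Pi>\<^sub>M j\<in>{}. step_law P"
      by (rule prob_space_PiM) (rule step.prob_space_axioms)
    show ?case
      by (simp add: F_def cn_T_def emeasure_space_1)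
  next
    case (Suc k)
    have "(\<integral>\<^sup>+x. F (Suc k) x \<partial>(\<Pi>\<^sub>M j\<in>{..<Suc k}. step_law P))
        = (\<integral>\<^sup>+x. (\<integral>\<^sup>+y. F (Suc k) (x(k := y)) \<partial>step_law P) \<partial>(\<Pi>\<^sub>M j\<in>{..<k}. step_law P))"
      unfolding lessThan_Suc by (rule product.product_nn_integral_insert) (auto intro!: F_meas)
    also have "\<dots> \<le> (\<integral>\<^sup>+x. F k x \<partial>(\<Pi>\<^sub>M j\<in>{..<k}. step_law P))"
      unfolding F_def using g_meas V_meas step by (intro nn_integral_mono nn_integral_cn_iter_Suc_le)
    finally show ?case
      using Suc.IH by (rule order_trans)
  qed
  moreover have "(\<integral>\<^sup>+\<omega>. F k \<omega> \<partial>cn_space P) = (\<integral>\<^sup>+\<omega>. F k \<omega> \<partial>(\<Pi>\<^sub>M j\<in>{..<k}. step_law P))"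
    using P_prob F_meas by (rule nn_integral_cn_space_eq_PiM_lessThan)
      (auto simp: F_def intro!: arg_cong2[where f = "\<lambda>t s. ennreal (exp (a * t) * V s)"] cn_T_cong cn_iter_cong)
  ultimately show ?thesis
    by (simp add: F_def)
qed

lemma nn_integral_step_law:
  assumes "prob_space P" and F: "F \<in> borel_measurable (step_law P)"
  shows "(\<integral>\<^sup>+w. F w \<partial>step_law P)
    = (\<integral>\<^sup>+t. ennreal (exponential_density 1 t) * (\<integral>\<^sup>+\<xi>. F (t, \<xi>) \<partial>P) \<partial>lborel)"
proof -
  interpret P: prob_space P
    by (fact assms(1))
  have F': "F \<in> borel_measurable (density lborel (exponential_density 1) \<Otimes>\<^sub>M P)"
    using F unfolding step_law_def .
  have "(\<integral>\<^sup>+w. F w \<partial>step_law P) = (\<integral>\<^sup>+t. (\<integral>\<^sup>+\<xi>. F (t, \<xi>) \<partial>P) \<partial>density lborel (exponential_density 1))"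
    unfolding step_law_def by (rule P.nn_integral_fst[OF F', symmetric])
  also have "\<dots> = (\<integral>\<^sup>+t. ennreal (exponential_density 1 t) * (\<integral>\<^sup>+\<xi>. F (t, \<xi>) \<partial>P) \<partial>lborel)"
    using P.borel_measurable_nn_integral_fst[OF F'] by (intro nn_integral_density) auto
  finally show ?thesis .
qed

lemma nn_integral_exp_decay_FTC:
  fixes U U' :: "real \<Rightarrow> real"
  assumes deriv: "\<And>t. (U has_real_derivative U' t) (at t)"
    and nonneg: "\<And>t. 0 \<le> t \<Longrightarrow> 0 \<le> (1 - a) * U t - U' t"
    and meas: "U' \<in> borel_measurable borel"
    and lim: "(U \<longlongrightarrow> l) at_top" and "a < 1"
  shows "(\<integral>\<^sup>+t. ennreal (exp ((a - 1) * t) * ((1 - a) * U t - U' t)) * indicator {0..} t \<partial>lborel)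
    = ennreal (U 0)"
proof -
  have "isCont U t" for t
    using deriv by (rule DERIV_isCont)
  then have "U \<in> borel_measurable borel"
    by (intro borel_measurable_continuous_onI continuous_at_imp_continuous_on) auto
  moreover have "((\<lambda>t. - (exp ((a - 1) * t) * U t)) has_real_derivative
      exp ((a - 1) * t) * ((1 - a) * U t - U' t)) (at t)" for t
    by (auto intro!: derivative_eq_intros deriv simp: algebra_simps)
  moreover have "((\<lambda>t. exp ((a - 1) * t)) \<longlongrightarrow> 0) at_top"
    using \<open>a < 1\<close> by real_asymp
  then have "((\<lambda>t. - (exp ((a - 1) * t) * U t)) \<longlongrightarrow> - (0 * l)) at_top"
    by (intro tendsto_intros lim)
  ultimately have "(\<integral>\<^sup>+t. ennreal (exp ((a - 1) * t) * ((1 - a) * U t - U' t)) * indicator {0..} t \<partial>lborel)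
      = ennreal (- (0 * l) - - (exp ((a - 1) * 0) * U 0))"
    using meas nonneg by (intro nn_integral_FTC_atLeast) auto
  then show ?thesis
    by simp
qed

section \<open>A Lyapunov function for the continuized process\<close>

locale cn_problem =
  fixes f :: "'a::euclidean_space \<Rightarrow> real" and df :: "'a \<Rightarrow> 'a"
    and P :: "'b measure" and g :: "'a \<Rightarrow> 'b \<Rightarrow> 'a"
    and fstar L \<mu> \<tau> \<rho> :: real and xstar :: 'a
  assumes grad: "\<And>x. (f has_derivative (\<lambda>h. df x \<bullet> h)) (at x)"
    and fmin: "\<And>x. fstar \<le> f x"
    and L_pos: "0 < L" and mu_nonneg: "0 \<le> \<mu>" and tau: "0 < \<tau>" "\<tau> < 2" and rho_nonneg: "0 \<le> \<rho>"
    and smooth: "\<And>x y. f x - f y - df y \<bullet> (x - y) \<le> L / 2 * (norm (x - y))\<^sup>2"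
    and SQC: "\<And>x. fstar \<ge> f x + (1 / \<tau>) * (df x \<bullet> (xstar - x)) + \<mu> / 2 * (norm (x - xstar))\<^sup>2"
    and P_prob: "prob_space P"
    and g_meas: "(\<lambda>(x, \<xi>). g x \<xi>) \<in> borel_measurable (borel \<Otimes>\<^sub>M P)"
    and unbiased: "\<And>x. integrable P (g x) \<and> (\<integral>\<xi>. g x \<xi> \<partial>P) = df x"
    and SGC: "\<And>x. (\<integral>\<^sup>+\<xi>. ennreal ((norm (g x \<xi>))\<^sup>2) \<partial>P) \<le> ennreal (\<rho> * (norm (df x))\<^sup>2)"
begin

sublocale P: prob_space P
  by (fact P_prob)

lemma quadratic_growth: "\<tau> * \<mu> / (2 * (2 - \<tau>)) * (norm (x - xstar))\<^sup>2 \<le> f x - fstar"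
  using grad fmin SQC tau mu_nonneg by (rule quadratic_growth_of_SQC)

lemma SQC_inner: "\<tau> * (f x - fstar) + \<tau> * \<mu> / 2 * (norm (x - xstar))\<^sup>2 \<le> df x \<bullet> (x - xstar)"
proof -
  have "df x \<bullet> (xstar - x) = - (df x \<bullet> (x - xstar))"
    by (simp add: inner_diff_right)
  with SQC[of x] tau show ?thesis
    by (simp add: field_simps)
qed

lemma isCont_f: "isCont f x"
  using has_derivative_continuous[OF grad] by simp

lemma measurable_f [measurable]: "f \<in> borel_measurable borel"
  using isCont_f by (intro borel_measurable_continuous_onI continuous_at_imp_continuous_on) auto

lemma measurable_df [measurable]: "df \<in> borel_measurable borel"
proof -
  have "(\<lambda>x. \<integral>\<xi>. g x \<xi> \<partial>P) \<in> borel_measurable borel"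
    using g_meas by (intro P.borel_measurable_lebesgue_integral) simp
  then show ?thesis
    using unbiased by simp
qed

lemma measurable_g [measurable]: "g y \<in> borel_measurable P"
  using measurable_Pair2[OF g_meas, of y] by simp

lemma integrable_norm_g_power2: "integrable P (\<lambda>\<xi>. (norm (g y \<xi>))\<^sup>2)"
  using SGC[of y] by (intro integrableI_nonneg) (auto simp: le_less_trans)

lemma integral_norm_g_power2_le: "(\<integral>\<xi>. (norm (g y \<xi>))\<^sup>2 \<partial>P) \<le> \<rho> * (norm (df y))\<^sup>2"
proof -
  have "ennreal (\<integral>\<xi>. (norm (g y \<xi>))\<^sup>2 \<partial>P) = (\<integral>\<^sup>+\<xi>. ennreal ((norm (g y \<xi>))\<^sup>2) \<partial>P)"
    using integrable_norm_g_power2 by (intro nn_integral_eq_integral[symmetric]) auto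
  also have "\<dots> \<le> ennreal (\<rho> * (norm (df y))\<^sup>2)"
    by (rule SGC)
  finally show ?thesis
    using rho_nonneg by (simp add: ennreal_le_iff)
qed

end

locale cn_lyapunov = cn_problem +
  fixes eta eta' gamma gamma' alpha B D :: real
  assumes eta_pos: "0 < eta" and eta'_pos: "0 < eta'"
    and B_nonneg: "0 \<le> B" and D_nonpos: "D \<le> 0" and minus_D_le: "- D \<le> \<tau> * \<mu> / (2 * (2 - \<tau>))"
    and coupling: "2 * B * gamma' = eta"
    and step_sizes: "\<rho> * (L * gamma\<^sup>2 / 2 + B * gamma'\<^sup>2) \<le> gamma"
    and alpha_twice_eta': "alpha = 2 * eta'"
    and cross_term: "B * eta' + D * eta = 0"
    and rate_gap: "alpha \<le> (eta + 2 * D * gamma) * \<tau>"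
    and rate_dist: "D * (alpha - 2 * eta) \<le> (eta + 2 * D * gamma) * \<tau> * \<mu> / 2"
    and alpha_lt_1: "alpha < 1"
begin

definition lyap :: "'a \<times> 'a \<Rightarrow> real" where
  "lyap = (\<lambda>(x, z). f x - fstar + B * (norm (z - xstar))\<^sup>2 + D * (norm (x - xstar))\<^sup>2)"

definition lyap_flow_deriv :: "'a \<Rightarrow> 'a \<Rightarrow> real" where
  "lyap_flow_deriv x z = eta * (df x \<bullet> (z - x)) + 2 * B * eta' * ((z - xstar) \<bullet> (x - z))
     + 2 * D * eta * ((x - xstar) \<bullet> (z - x))"

lemma measurable_lyap [measurable]: "lyap \<in> borel_measurable borel"
  unfolding lyap_def borel_prod[symmetric] by measurable

lemma lyap_lower_bound:
  assumes "- D \<le> \<theta> * (\<tau> * \<mu> / (2 * (2 - \<tau>)))" "0 \<le> \<theta>"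
  shows "(1 - \<theta>) * (f x - fstar) \<le> lyap (x, z)"
proof -
  have "- D * (norm (x - xstar))\<^sup>2 \<le> \<theta> * (\<tau> * \<mu> / (2 * (2 - \<tau>)) * (norm (x - xstar))\<^sup>2)"
    using mult_right_mono[OF assms(1), of "(norm (x - xstar))\<^sup>2"] by simp
  also have "\<dots> \<le> \<theta> * (f x - fstar)"
    using quadratic_growth \<open>0 \<le> \<theta>\<close> by (rule mult_left_mono)
  moreover have "0 \<le> B * (norm (z - xstar))\<^sup>2"
    using B_nonneg by simp
  ultimately show ?thesis
    by (simp add: lyap_def algebra_simps)
qed

lemma lyap_nonneg: "0 \<le> lyap s"
  using lyap_lower_bound[of 1 "fst s" "snd s"] minus_D_le by simp

lemma lyap_jump_le:
  "lyap (y - gamma *\<^sub>R G, z - gamma' *\<^sub>R G) \<le> lyap (y, z) - gamma * (df y \<bullet> G)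
     - 2 * B * gamma' * ((z - xstar) \<bullet> G) - 2 * D * gamma * ((y - xstar) \<bullet> G)
     + (L * gamma\<^sup>2 / 2 + B * gamma'\<^sup>2) * (norm G)\<^sup>2"
proof -
  have "f (y - gamma *\<^sub>R G) \<le> f y - gamma * (df y \<bullet> G) + L * gamma\<^sup>2 / 2 * (norm G)\<^sup>2"
    using smooth[of "y - gamma *\<^sub>R G" y] by (simp add: power_mult_distrib)
  moreover have expand: "(norm (w - c *\<^sub>R G - xstar))\<^sup>2
      = (norm (w - xstar))\<^sup>2 - 2 * c * ((w - xstar) \<bullet> G) + c\<^sup>2 * (norm G)\<^sup>2" for w and c :: real
    unfolding power2_norm_eq_inner by (simp add: algebra_simps inner_commute power2_eq_square)
  moreover have "D * (gamma\<^sup>2 * (norm G)\<^sup>2) \<le> 0"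
    using D_nonpos by (simp add: mult_nonpos_nonneg)
  ultimately show ?thesis
    unfolding lyap_def prod.case expand by (simp add: algebra_simps)
qed

lemma lyap_drift_eq:
  "(1 - alpha) * lyap (y, z) - lyap_flow_deriv y z
      - (lyap (y, z) - eta * ((z - xstar) \<bullet> df y) - 2 * D * gamma * ((y - xstar) \<bullet> df y))
    = (eta + 2 * D * gamma) * (df y \<bullet> (y - xstar)) - alpha * (f y - fstar)
      + D * (2 * eta - alpha) * (norm (y - xstar))\<^sup>2"
proof -
  define u v where "u = z - xstar" and "v = y - xstar"
  have "z - y = u - v" "y - z = v - u" "z - xstar = u" "y - xstar = v"
    by (simp_all add: u_def v_def)
  then have V: "lyap (y, z) = f y - fstar + B * (u \<bullet> u) + D * (v \<bullet> v)"
    and V': "lyap_flow_deriv y z = eta * (df y \<bullet> u - df y \<bullet> v) + 2 * B * eta' * (u \<bullet> v - u \<bullet> u)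
      + 2 * D * eta * (v \<bullet> u - v \<bullet> v)"
    unfolding lyap_def lyap_flow_deriv_def prod.case power2_norm_eq_inner
    by (simp_all add: inner_diff_left inner_diff_right)
  have "(1 - alpha) * lyap (y, z) - lyap_flow_deriv y z - (lyap (y, z) - eta * (u \<bullet> df y) - 2 * D * gamma * (v \<bullet> df y))
      = (eta + 2 * D * gamma) * (df y \<bullet> v) - alpha * (f y - fstar) + D * (2 * eta - alpha) * (norm v)\<^sup>2
        - 2 * (B * eta' + D * eta) * (u \<bullet> v)"
    unfolding V V' alpha_twice_eta' power2_norm_eq_inner by (simp add: inner_commute algebra_simps)
  then show ?thesis
    by (simp add: cross_term u_def v_def)
qed

lemma lyap_drift_le:
  "lyap (y, z) - eta * ((z - xstar) \<bullet> df y) - 2 * D * gamma * ((y - xstar) \<bullet> df y)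
     \<le> (1 - alpha) * lyap (y, z) - lyap_flow_deriv y z"
proof -
  define v where "v = y - xstar"
  define \<kappa> where "\<kappa> = eta + 2 * D * gamma"
  have "0 < \<kappa> * \<tau>"
    using rate_gap alpha_twice_eta' eta'_pos by (simp add: \<kappa>_def)
  then have "0 < \<kappa>"
    using tau by (simp add: zero_less_mult_iff)
  have "0 \<le> (\<kappa> * \<tau> - alpha) * (f y - fstar)"
    using rate_gap fmin[of y] by (simp add: \<kappa>_def)
  moreover have "D * (2 * eta - alpha) = - (D * (alpha - 2 * eta))"
    by (simp add: algebra_simps)
  with rate_dist have "0 \<le> \<kappa> * \<tau> * \<mu> / 2 + D * (2 * eta - alpha)"
    unfolding \<kappa>_def by linarith
  then have "0 \<le> (\<kappa> * \<tau> * \<mu> / 2 + D * (2 * eta - alpha)) * (norm v)\<^sup>2"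
    by simp
  ultimately have "0 \<le> (\<kappa> * \<tau> - alpha) * (f y - fstar) + (\<kappa> * \<tau> * \<mu> / 2 + D * (2 * eta - alpha)) * (norm v)\<^sup>2"
    by simp
  also have "\<dots> = \<kappa> * (\<tau> * (f y - fstar) + \<tau> * \<mu> / 2 * (norm v)\<^sup>2) - alpha * (f y - fstar)
      + D * (2 * eta - alpha) * (norm v)\<^sup>2"
    by (simp add: algebra_simps)
  also have "\<dots> \<le> \<kappa> * (df y \<bullet> v) - alpha * (f y - fstar) + D * (2 * eta - alpha) * (norm v)\<^sup>2"
    using mult_left_mono[OF SQC_inner[of y] less_imp_le[OF \<open>0 < \<kappa>\<close>]] by (simp add: v_def)
  also have "\<dots> = (1 - alpha) * lyap (y, z) - lyap_flow_deriv y z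
      - (lyap (y, z) - eta * ((z - xstar) \<bullet> df y) - 2 * D * gamma * ((y - xstar) \<bullet> df y))"
    by (simp add: lyap_drift_eq \<kappa>_def v_def)
  finally show ?thesis
    by simp
qed

lemma lyap_jump_majorant:
  obtains R where "integrable P R"
    and "\<And>\<xi>. lyap (y - gamma *\<^sub>R g y \<xi>, z - gamma' *\<^sub>R g y \<xi>) \<le> R \<xi>"
    and "(\<integral>\<xi>. R \<xi> \<partial>P) \<le> (1 - alpha) * lyap (y, z) - lyap_flow_deriv y z"
proof
  define c where "c = L * gamma\<^sup>2 / 2 + B * gamma'\<^sup>2"
  define R where "R \<xi> = lyap (y, z) - gamma * (df y \<bullet> g y \<xi>) - 2 * B * gamma' * ((z - xstar) \<bullet> g y \<xi>)
    - 2 * D * gamma * ((y - xstar) \<bullet> g y \<xi>) + c * (norm (g y \<xi>))\<^sup>2" for \<xi>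
  have g_int: "integrable P (g y)" and g_mean: "(\<integral>\<xi>. g y \<xi> \<partial>P) = df y"
    using unbiased by auto
  show "integrable P R"
    unfolding R_def using g_int integrable_norm_g_power2 by simp
  show "lyap (y - gamma *\<^sub>R g y \<xi>, z - gamma' *\<^sub>R g y \<xi>) \<le> R \<xi>" for \<xi>
    unfolding R_def c_def by (rule lyap_jump_le)
  have "(\<integral>\<xi>. R \<xi> \<partial>P) = lyap (y, z) - gamma * (norm (df y))\<^sup>2 - 2 * B * gamma' * ((z - xstar) \<bullet> df y)
      - 2 * D * gamma * ((y - xstar) \<bullet> df y) + c * (\<integral>\<xi>. (norm (g y \<xi>))\<^sup>2 \<partial>P)"
    unfolding R_def using g_int integrable_norm_g_power2 g_mean
    by (simp add: power2_norm_eq_inner inner_commute P.prob_space)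
  also have "\<dots> \<le> lyap (y, z) - eta * ((z - xstar) \<bullet> df y) - 2 * D * gamma * ((y - xstar) \<bullet> df y)"
  proof -
    have "c * (\<integral>\<xi>. (norm (g y \<xi>))\<^sup>2 \<partial>P) \<le> c * (\<rho> * (norm (df y))\<^sup>2)"
      using B_nonneg L_pos by (intro mult_left_mono integral_norm_g_power2_le) (simp_all add: c_def)
    also have "\<dots> = (\<rho> * c) * (norm (df y))\<^sup>2"
      by simp
    also have "\<dots> \<le> gamma * (norm (df y))\<^sup>2"
      using step_sizes unfolding c_def by (rule mult_right_mono) simp
    finally show ?thesis
      using coupling by simp
  qed
  also have "\<dots> \<le> (1 - alpha) * lyap (y, z) - lyap_flow_deriv y z"
    by (rule lyap_drift_le)
  finally show "(\<integral>\<xi>. R \<xi> \<partial>P) \<le> (1 - alpha) * lyap (y, z) - lyap_flow_deriv y z" .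
qed

lemma lyap_drift_nonneg: "0 \<le> (1 - alpha) * lyap (y, z) - lyap_flow_deriv y z"
proof -
  obtain R where le: "\<And>\<xi>. lyap (y - gamma *\<^sub>R g y \<xi>, z - gamma' *\<^sub>R g y \<xi>) \<le> R \<xi>"
    and mean: "(\<integral>\<xi>. R \<xi> \<partial>P) \<le> (1 - alpha) * lyap (y, z) - lyap_flow_deriv y z"
    using lyap_jump_majorant by blast
  have "0 \<le> R \<xi>" for \<xi>
    using le[of \<xi>] lyap_nonneg order_trans by blast
  then have "0 \<le> (\<integral>\<xi>. R \<xi> \<partial>P)"
    by (simp add: integral_nonneg)
  with mean show ?thesis
    by linarith
qed

lemma nn_integral_lyap_jump_le:
  "(\<integral>\<^sup>+\<xi>. ennreal (lyap (y - gamma *\<^sub>R g y \<xi>, z - gamma' *\<^sub>R g y \<xi>)) \<partial>P)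
    \<le> ennreal ((1 - alpha) * lyap (y, z) - lyap_flow_deriv y z)"
proof -
  obtain R where R: "integrable P R"
    and le: "\<And>\<xi>. lyap (y - gamma *\<^sub>R g y \<xi>, z - gamma' *\<^sub>R g y \<xi>) \<le> R \<xi>"
    and mean: "(\<integral>\<xi>. R \<xi> \<partial>P) \<le> (1 - alpha) * lyap (y, z) - lyap_flow_deriv y z"
    using lyap_jump_majorant by blast
  have "0 \<le> R \<xi>" for \<xi>
    using le[of \<xi>] lyap_nonneg order_trans by blast
  have "(\<integral>\<^sup>+\<xi>. ennreal (lyap (y - gamma *\<^sub>R g y \<xi>, z - gamma' *\<^sub>R g y \<xi>)) \<partial>P) \<le> (\<integral>\<^sup>+\<xi>. ennreal (R \<xi>) \<partial>P)"
    by (intro nn_integral_mono ennreal_leI le)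
  also have "\<dots> = ennreal (\<integral>\<xi>. R \<xi> \<partial>P)"
    using R \<open>\<And>\<xi>. 0 \<le> R \<xi>\<close> by (intro nn_integral_eq_integral) auto
  also have "\<dots> \<le> ennreal ((1 - alpha) * lyap (y, z) - lyap_flow_deriv y z)"
    using mean by (rule ennreal_leI)
  finally show ?thesis .
qed

lemma lyap_mix_has_real_derivative:
  "((\<lambda>t. lyap (mix_x eta eta' x z t, mix_z eta eta' x z t)) has_real_derivative
     lyap_flow_deriv (mix_x eta eta' x z t) (mix_z eta eta' x z t)) (at t)"
proof -
  have "eta + eta' \<noteq> 0"
    using eta_pos eta'_pos by simp
  note dx = mix_x_has_vector_derivative[OF this] and dz = mix_z_has_vector_derivative[OF this]
  have "((\<lambda>t. f (mix_x eta eta' x z t) - fstar + B * (norm (mix_z eta eta' x z t - xstar))\<^sup>2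
        + D * (norm (mix_x eta eta' x z t - xstar))\<^sup>2) has_real_derivative
      df (mix_x eta eta' x z t) \<bullet> (eta *\<^sub>R (mix_z eta eta' x z t - mix_x eta eta' x z t)) - 0
      + B * (2 * ((mix_z eta eta' x z t - xstar) \<bullet> (eta' *\<^sub>R (mix_x eta eta' x z t - mix_z eta eta' x z t))))
      + D * (2 * ((mix_x eta eta' x z t - xstar) \<bullet> (eta *\<^sub>R (mix_z eta eta' x z t - mix_x eta eta' x z t))))) (at t)"
    by (intro DERIV_add DERIV_diff DERIV_cmult DERIV_const has_real_derivative_gradient_comp[OF grad dx]
        has_real_derivative_norm_diff_power2 dx dz)
  then show ?thesis
    by (simp add: lyap_def lyap_flow_deriv_def algebra_simps)
qed

lemma lyap_tendsto:
  "(X \<longlongrightarrow> a) F \<Longrightarrow> (Z \<longlongrightarrow> b) F \<Longrightarrow> ((\<lambda>t. lyap (X t, Z t)) \<longlongrightarrow> lyap (a, b)) F"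
  unfolding lyap_def by (auto intro!: tendsto_intros isCont_tendsto_compose[OF isCont_f])

lemma lyap_step_density_le:
  "ennreal (exponential_density 1 t)
      * (\<integral>\<^sup>+\<xi>. ennreal (exp (alpha * t) * lyap (cn_step eta eta' gamma gamma' g (x, z) (t, \<xi>))) \<partial>P)
    \<le> ennreal (exp ((alpha - 1) * t) * ((1 - alpha) * lyap (mix_x eta eta' x z t, mix_z eta eta' x z t)
        - lyap_flow_deriv (mix_x eta eta' x z t) (mix_z eta eta' x z t))) * indicator {0..} t"
proof (cases "t < 0")
  case False
  let ?y = "mix_x eta eta' x z t" and ?z = "mix_z eta eta' x z t"
  let ?d = "(1 - alpha) * lyap (?y, ?z) - lyap_flow_deriv ?y ?z"
  have "(\<integral>\<^sup>+\<xi>. ennreal (exp (alpha * t) * lyap (cn_step eta eta' gamma gamma' g (x, z) (t, \<xi>))) \<partial>P)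
      = ennreal (exp (alpha * t)) * (\<integral>\<^sup>+\<xi>. ennreal (lyap (?y - gamma *\<^sub>R g ?y \<xi>, ?z - gamma' *\<^sub>R g ?y \<xi>)) \<partial>P)"
    unfolding cn_step_mix[OF eta_pos eta'_pos] Let_def by (simp add: ennreal_mult' nn_integral_cmult)
  also have "\<dots> \<le> ennreal (exp (alpha * t)) * ennreal ?d"
    by (intro mult_left_mono nn_integral_lyap_jump_le) simp
  finally have "ennreal (exponential_density 1 t)
      * (\<integral>\<^sup>+\<xi>. ennreal (exp (alpha * t) * lyap (cn_step eta eta' gamma gamma' g (x, z) (t, \<xi>))) \<partial>P)
    \<le> ennreal (exp (- t)) * (ennreal (exp (alpha * t)) * ennreal ?d)"
    using False by (simp add: exponential_density_def mult_left_mono)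
  also have "\<dots> = ennreal (exp (- t) * exp (alpha * t) * ?d)"
    by (simp add: ennreal_mult' mult.assoc)
  also have "exp (- t) * exp (alpha * t) = exp ((alpha - 1) * t)"
    by (simp add: mult_exp_exp algebra_simps)
  finally show ?thesis
    using False by simp
qed (simp add: exponential_density_def)

lemma lyap_one_step:
  "(\<integral>\<^sup>+w. ennreal (exp (alpha * fst w) * lyap (cn_step eta eta' gamma gamma' g s w)) \<partial>step_law P)
    \<le> ennreal (lyap s)"
proof -
  obtain x z where s: "s = (x, z)"
    by fastforce
  define U where "U t = lyap (mix_x eta eta' x z t, mix_z eta eta' x z t)" for t
  define U' where "U' t = lyap_flow_deriv (mix_x eta eta' x z t) (mix_z eta eta' x z t)" for t
  have "(\<lambda>w. (s, w)) \<in> measurable (step_law P) (borel \<Otimes>\<^sub>M step_law P)"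
    by measurable
  from measurable_compose[OF this measurable_cn_step[OF g_meas]]
  have [measurable]: "cn_step eta eta' gamma gamma' g s \<in> borel_measurable (step_law P)"
    by simp
  have "(\<lambda>w. ennreal (exp (alpha * fst w) * lyap (cn_step eta eta' gamma gamma' g s w))) \<in> borel_measurable (step_law P)"
    by measurable
  from nn_integral_step_law[OF P_prob this]
  have "(\<integral>\<^sup>+w. ennreal (exp (alpha * fst w) * lyap (cn_step eta eta' gamma gamma' g s w)) \<partial>step_law P)
      = (\<integral>\<^sup>+t. ennreal (exponential_density 1 t)
          * (\<integral>\<^sup>+\<xi>. ennreal (exp (alpha * t) * lyap (cn_step eta eta' gamma gamma' g s (t, \<xi>))) \<partial>P) \<partial>lborel)"
    by simp
  also have "\<dots> \<le> (\<integral>\<^sup>+t. ennreal (exp ((alpha - 1) * t) * ((1 - alpha) * U t - U' t)) * indicator {0..} t \<partial>lborel)"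
    unfolding s U_def U'_def by (intro nn_integral_mono lyap_step_density_le)
  also have "\<dots> = ennreal (U 0)"
  proof (rule nn_integral_exp_decay_FTC)
    show "(U has_real_derivative U' t) (at t)" for t
      unfolding U_def[abs_def] U'_def by (rule lyap_mix_has_real_derivative)
    show "0 \<le> (1 - alpha) * U t - U' t" for t
      unfolding U_def U'_def by (rule lyap_drift_nonneg)
    show "U' \<in> borel_measurable borel"
      unfolding U'_def[abs_def] lyap_flow_deriv_def mix_x_def mix_z_def mix_weight_def by measurable
    have "eta + eta' > 0"
      using eta_pos eta'_pos by simp
    then show "(U \<longlongrightarrow> lyap (x + (eta / (eta + eta')) *\<^sub>R (z - x), z - (eta' / (eta + eta')) *\<^sub>R (z - x))) at_top"
      unfolding U_def[abs_def] by (intro lyap_tendsto mix_x_tendsto mix_z_tendsto)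
  qed (rule alpha_lt_1)
  also have "U 0 = lyap s"
    by (simp add: U_def s)
  finally show ?thesis .
qed

lemma nn_integral_lyap_cn_iter_le:
  "(\<integral>\<^sup>+\<omega>. ennreal (exp (alpha * cn_T k \<omega>) * lyap (cn_iter eta eta' gamma gamma' g x0 k \<omega>)) \<partial>cn_space P)
    \<le> ennreal (lyap (x0, x0))"
  using P_prob g_meas measurable_lyap lyap_one_step by (rule nn_integral_cn_iter_le)

lemma nn_integral_gap_cn_iter_le:
  assumes "- D \<le> (1 - \<epsilon>) * (\<tau> * \<mu> / (2 * (2 - \<tau>)))" "0 < \<epsilon>" "\<epsilon> \<le> 1"
  shows "(\<integral>\<^sup>+\<omega>. ennreal (exp (alpha * cn_T k \<omega>) * (f (fst (cn_iter eta eta' gamma gamma' g x0 k \<omega>)) - fstar))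
      \<partial>cn_space P) \<le> ennreal (1 / \<epsilon> * lyap (x0, x0))"
proof -
  let ?X = "cn_iter eta eta' gamma gamma' g x0 k"
  have [measurable]: "?X \<in> borel_measurable (cn_space P)" "cn_T k \<in> borel_measurable (cn_space P)"
    unfolding cn_space_def by (auto intro: measurable_cn_iter[OF g_meas] measurable_cn_T)
  have "exp (alpha * cn_T k \<omega>) * (f (fst (?X \<omega>)) - fstar)
      \<le> 1 / \<epsilon> * (exp (alpha * cn_T k \<omega>) * lyap (?X \<omega>))" for \<omega>
  proof -
    have "\<epsilon> * (f (fst (?X \<omega>)) - fstar) \<le> lyap (?X \<omega>)"
      using lyap_lower_bound[of "1 - \<epsilon>" "fst (?X \<omega>)" "snd (?X \<omega>)"] assms by simp
    then have "f (fst (?X \<omega>)) - fstar \<le> 1 / \<epsilon> * lyap (?X \<omega>)"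
      using \<open>0 < \<epsilon>\<close> by (simp add: field_simps)
    then have "exp (alpha * cn_T k \<omega>) * (f (fst (?X \<omega>)) - fstar) \<le> exp (alpha * cn_T k \<omega>) * (1 / \<epsilon> * lyap (?X \<omega>))"
      by (rule mult_left_mono) simp
    then show ?thesis
      by (simp add: mult_ac)
  qed
  then have "(\<integral>\<^sup>+\<omega>. ennreal (exp (alpha * cn_T k \<omega>) * (f (fst (?X \<omega>)) - fstar)) \<partial>cn_space P)
      \<le> (\<integral>\<^sup>+\<omega>. ennreal (1 / \<epsilon>) * ennreal (exp (alpha * cn_T k \<omega>) * lyap (?X \<omega>)) \<partial>cn_space P)"
    using \<open>0 < \<epsilon>\<close> by (intro nn_integral_mono) (simp add: ennreal_leI flip: ennreal_mult')
  also have "\<dots> = ennreal (1 / \<epsilon>) * (\<integral>\<^sup>+\<omega>. ennreal (exp (alpha * cn_T k \<omega>) * lyap (?X \<omega>)) \<partial>cn_space P)"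
    by (rule nn_integral_cmult) measurable
  also have "\<dots> \<le> ennreal (1 / \<epsilon>) * ennreal (lyap (x0, x0))"
    by (intro mult_left_mono nn_integral_lyap_cn_iter_le) simp
  also have "\<dots> = ennreal (1 / \<epsilon> * lyap (x0, x0))"
    using \<open>0 < \<epsilon>\<close> by (intro ennreal_mult'[symmetric]) simp
  finally show ?thesis .
qed

end

section \<open>The parameter choice of the theorem\<close>

locale cn_parameters =
  fixes L \<mu> \<tau> \<rho> \<epsilon> :: real
  assumes L_pos: "0 < L" and mu_pos: "0 < \<mu>" and tau: "0 < \<tau>" "\<tau> \<le> 1" and rho: "1 \<le> \<rho>"
    and eps: "0 < \<epsilon>" "\<epsilon> < 1" "(\<mu> / L) powr (1/4) \<le> \<epsilon>"
begin

definition "eta = 1 / \<rho> * sqrt (2 / (2 - \<tau>)) * sqrt (\<mu> / L)"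
definition "eta' = (1 - \<epsilon>) * \<tau> / \<rho> * sqrt (1 / (2 * (2 - \<tau>))) * sqrt (\<mu> / L)"
definition "gamma = 1 / (\<rho> * L)"
definition "gamma' = 1 / \<rho> * sqrt ((2 - \<tau>) / (2 * \<mu> * L))"
definition "alpha = (1 - \<epsilon>) * \<tau> / \<rho> * sqrt (2 / (2 - \<tau>)) * sqrt (\<mu> / L)"
definition "B = \<mu> / (2 - \<tau>)"
definition "D = - ((1 - \<epsilon>) * \<tau> * B / 2)"

definition q :: real where "q = sqrt (\<mu> / L)"
definition r :: real where "r = sqrt (2 / (2 - \<tau>))"

lemma q_pos: "0 < q"
  using mu_pos L_pos by (simp add: q_def)

lemma q_sq: "q\<^sup>2 = \<mu> / L"
  using mu_pos L_pos by (simp add: q_def)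

lemma q_le: "q \<le> \<epsilon>\<^sup>2"
proof -
  have "((\<mu> / L) powr (1/4)) ^ 4 = \<mu> / L"
    using mu_pos L_pos by (simp add: powr_power)
  then have "q\<^sup>2 \<le> (\<epsilon>\<^sup>2)\<^sup>2"
    using power_mono[OF eps(3), of 4] by (simp add: q_sq)
  then show ?thesis
    by (rule power2_le_imp_le) simp
qed

lemma r_sq: "r\<^sup>2 = 2 / (2 - \<tau>)"
  using tau by (simp add: r_def)

lemma r_sq_mult: "r\<^sup>2 * (2 - \<tau>) = 2"
  using tau by (simp add: r_sq field_simps)

lemma r_ge_1: "1 \<le> r"
  using tau by (simp add: r_def)

lemma r_le_2: "r \<le> 2"
proof -
  have "r\<^sup>2 \<le> 2\<^sup>2"
    using tau by (simp add: r_def divide_le_eq)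
  then show ?thesis
    by (rule power2_le_imp_le) simp
qed

lemma eta_eq: "eta = r * q / \<rho>"
  by (simp add: eta_def r_def q_def)

lemma eta'_eq: "eta' = (1 - \<epsilon>) * \<tau> * eta / 2"
proof -
  have sqrt_eq: "sqrt (1 / (2 * (2 - \<tau>))) = r / 2"
    using tau r_ge_1 by (intro real_sqrt_unique) (simp_all add: r_def power_divide field_simps)
  show ?thesis
    unfolding eta'_def eta_eq sqrt_eq q_def[symmetric] by simp
qed

lemma alpha_eq_eta: "alpha = (1 - \<epsilon>) * \<tau> * eta"
  by (simp add: alpha_def eta_def)

lemma gamma'_eq: "gamma' = 1 / (\<rho> * r * q * L)"
proof -
  have "sqrt ((2 - \<tau>) / (2 * \<mu> * L)) = 1 / (r * q * L)"
  proof (rule real_sqrt_unique)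
    have "(r * q * L)\<^sup>2 = 2 / (2 - \<tau>) * (\<mu> / L) * L\<^sup>2"
      by (simp only: power_mult_distrib r_sq q_sq)
    also have "\<dots> = 2 * \<mu> * L / (2 - \<tau>)"
      using L_pos tau by (simp add: field_simps power2_eq_square)
    finally show "(1 / (r * q * L))\<^sup>2 = (2 - \<tau>) / (2 * \<mu> * L)"
      by (simp add: power_divide)
    show "0 \<le> 1 / (r * q * L)"
      using r_ge_1 q_pos L_pos by simp
  qed
  then show ?thesis
    by (simp add: gamma'_def)
qed

lemma B_eq: "B = q\<^sup>2 * L * r\<^sup>2 / 2"
  using tau L_pos by (simp add: B_def q_sq r_sq field_simps)

lemma eta_pos: "0 < eta"
  using r_ge_1 q_pos rho by (simp add: eta_eq)

lemma eta'_pos: "0 < eta'"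
  using eta_pos eps tau by (simp add: eta'_eq)

lemma B_pos: "0 < B"
  using mu_pos tau by (simp add: B_def)

lemma minus_D_eq: "- D = (1 - \<epsilon>) * (\<tau> * \<mu> / (2 * (2 - \<tau>)))"
  using tau by (simp add: D_def B_def field_simps)

lemma D_nonpos: "D \<le> 0"
  using B_pos eps tau by (simp add: D_def)

lemma minus_D_le: "- D \<le> \<tau> * \<mu> / (2 * (2 - \<tau>))"
  unfolding minus_D_eq using eps tau mu_pos by (intro mult_left_le_one_le) simp_all

lemma B_plus_D_le: "B + D \<le> \<mu>"
proof -
  have "\<mu> / (2 - \<tau>) \<le> \<mu> / 1"
    using mu_pos tau by (intro divide_left_mono) simp_all
  with D_nonpos show ?thesis
    by (simp add: B_def)
qed

lemma coupling: "2 * B * gamma' = eta"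
  using r_ge_1 q_pos L_pos rho by (simp add: B_eq gamma'_eq eta_eq power2_eq_square)

lemma step_sizes: "\<rho> * (L * gamma\<^sup>2 / 2 + B * gamma'\<^sup>2) = gamma"
  using r_ge_1 q_pos L_pos rho by (simp add: B_eq gamma'_eq gamma_def field_simps power2_eq_square)

lemma alpha_twice_eta': "alpha = 2 * eta'"
  by (simp add: alpha_eq_eta eta'_eq)

lemma cross_term: "B * eta' + D * eta = 0"
  by (simp add: D_def eta'_eq)

lemma mixing_bound: "(1 - \<epsilon>) * \<tau> * q * r \<le> 2 * \<epsilon>\<^sup>2 * (1 - \<epsilon>)"
proof -
  have "(1 - \<epsilon>) * \<tau> * (q * r) \<le> (1 - \<epsilon>) * 1 * (\<epsilon>\<^sup>2 * 2)"
    using eps tau q_pos q_le r_ge_1 r_le_2 by (intro mult_mono) simp_all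
  then show ?thesis
    by (simp add: mult_ac)
qed

lemma D_gamma_eq: "2 * D * gamma = - ((1 - \<epsilon>) * \<tau> * q * r) / 2 * eta"
  using L_pos rho q_pos r_ge_1 by (simp add: D_def B_eq gamma_def eta_eq field_simps power2_eq_square)

lemma rate_gap: "alpha \<le> (eta + 2 * D * gamma) * \<tau>"
proof -
  have "\<epsilon>\<^sup>2 * (1 - \<epsilon>) \<le> \<epsilon> * 1"
    using eps by (intro mult_mono) (simp_all add: power2_eq_square mult_left_le_one_le)
  with mixing_bound have "(1 - \<epsilon>) * \<tau> * q * r / 2 \<le> \<epsilon>"
    by simp
  then have "(1 - \<epsilon>) * \<tau> * q * r / 2 * eta \<le> \<epsilon> * eta"
    using less_imp_le[OF eta_pos] by (rule mult_right_mono)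
  moreover have "eta + 2 * D * gamma = eta - (1 - \<epsilon>) * \<tau> * q * r / 2 * eta"
    by (simp add: D_gamma_eq)
  moreover have "(1 - \<epsilon>) * eta = eta - \<epsilon> * eta"
    by (simp add: algebra_simps)
  ultimately have "(1 - \<epsilon>) * eta \<le> eta + 2 * D * gamma"
    by linarith
  then show ?thesis
    using tau by (simp add: alpha_eq_eta mult_right_mono mult_ac)
qed

lemma alpha_lt_1: "alpha < 1"
proof -
  have "alpha = (1 - \<epsilon>) * \<tau> * q * r / \<rho>"
    by (simp add: alpha_eq_eta eta_eq mult_ac)
  also have "\<dots> \<le> (1 - \<epsilon>) * \<tau> * q * r / 1"
    using rho eps tau q_pos r_ge_1 by (intro divide_left_mono) simp_all
  also have "\<dots> \<le> 2 * \<epsilon>\<^sup>2 * (1 - \<epsilon>)"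
    using mixing_bound by simp
  also have "\<dots> < 1"
  proof -
    have "\<epsilon>\<^sup>2 * (1 - \<epsilon>) \<le> \<epsilon> * (1 - \<epsilon>)"
      using eps by (intro mult_right_mono) (simp_all add: power2_eq_square mult_left_le_one_le)
    moreover have "\<epsilon> * (1 - \<epsilon>) < 1 / 2"
      using zero_le_power2[of "\<epsilon> - 1/2"] by (simp add: power2_eq_square algebra_simps)
    ultimately show ?thesis
      by linarith
  qed
  finally show ?thesis .
qed

lemma rate_dist: "D * (alpha - 2 * eta) \<le> (eta + 2 * D * gamma) * \<tau> * \<mu> / 2"
proof -
  define a where "a = (1 - \<epsilon>) * \<tau>"
  have "0 \<le> a" "a \<le> 1"
    using eps tau by (simp_all add: a_def mult_le_one)
  have r_tau: "r * (2 - \<tau>) \<le> 2"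
  proof -
    have "r * (2 - \<tau>) \<le> r * r * (2 - \<tau>)"
      using r_ge_1 tau by (intro mult_right_mono) (simp_all add: mult_le_cancel_left1)
    then show ?thesis
      using r_sq_mult by (simp add: power2_eq_square)
  qed
  have "(2 - \<tau>) * (a * (2 - a) * r\<^sup>2 + a * \<tau> * q * r) = 2 * a * (2 - a) + a * \<tau> * q * (r * (2 - \<tau>))"
    using r_sq_mult by (simp add: algebra_simps)
  also have "\<dots> \<le> 2 * a * (2 - a) + a * \<tau> * \<epsilon>\<^sup>2 * 2"
    using \<open>0 \<le> a\<close> tau q_pos q_le r_tau r_ge_1 by (intro add_left_mono mult_mono) simp_all
  also have "\<dots> = 2 * \<tau> * (2 - \<tau>) - 2 * \<tau> * (2 * \<epsilon> * (1 - \<tau>) + \<tau> * \<epsilon> ^ 3)"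
    by (simp add: a_def power2_eq_square power3_eq_cube algebra_simps)
  also have "\<dots> \<le> (2 - \<tau>) * (2 * \<tau>)"
    using eps tau by simp
  finally have core: "a * (2 - a) * r\<^sup>2 \<le> 2 * \<tau> - a * \<tau> * q * r"
    using tau by simp
  have "D * (alpha - 2 * eta) = eta * \<mu> / 4 * (a * (2 - a) * r\<^sup>2)"
    using tau by (simp add: D_def B_def r_sq alpha_eq_eta a_def field_simps)
  also have "\<dots> \<le> eta * \<mu> / 4 * (2 * \<tau> - a * \<tau> * q * r)"
    using core eta_pos mu_pos by (intro mult_left_mono) simp_all
  also have "\<dots> = (eta + 2 * D * gamma) * \<tau> * \<mu> / 2"
    unfolding D_gamma_eq a_def by (simp add: field_simps)
  finally show ?thesis .
qed

end

theorem theorem5: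
  fixes f :: "'a::euclidean_space \<Rightarrow> real" and df :: "'a \<Rightarrow> 'a"
    and P :: "'b measure" and g :: "'a \<Rightarrow> 'b \<Rightarrow> 'a"
    and fstar L \<mu> \<tau> \<rho> \<epsilon> :: real and xstar x0 :: 'a
  assumes grad: "\<And>x. (f has_derivative (\<lambda>h. df x \<bullet> h)) (at x)"
    and fmin: "\<And>x. fstar \<le> f x" and xstar_min: "f xstar = fstar"
    and L_pos: "L > 0" and mu_pos: "\<mu> > 0"
    and tau: "0 < \<tau>" "\<tau> \<le> 1" and rho: "\<rho> \<ge> 1"
    and smooth: "\<And>x y. f x - f y - df y \<bullet> (x - y) \<le> L / 2 * (norm (x - y))\<^sup>2"
    and SQC: "\<And>x. fstar \<ge> f x + (1 / \<tau>) * (df x \<bullet> (xstar - x)) + \<mu> / 2 * (norm (x - xstar))\<^sup>2"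
    and P_prob: "prob_space P"
    and g_meas: "(\<lambda>(x, \<xi>). g x \<xi>) \<in> borel_measurable (borel \<Otimes>\<^sub>M P)"
    and unbiased: "\<And>x. integrable P (g x) \<and> (\<integral>\<xi>. g x \<xi> \<partial>P) = df x"
    and SGC: "\<And>x. (\<integral>\<^sup>+\<xi>. ennreal ((norm (g x \<xi>))\<^sup>2) \<partial>P) \<le> ennreal (\<rho> * (norm (df x))\<^sup>2)"
    and eps: "0 < \<epsilon>" "\<epsilon> < 1" "\<epsilon> \<ge> (\<mu> / L) powr (1/4)"
  shows "(\<integral>\<^sup>+\<omega>. ennreal (exp ((1 - \<epsilon>) * \<tau> / \<rho> * sqrt (2 / (2 - \<tau>)) * sqrt (\<mu> / L) * cn_T k \<omega>)
              * (f (fst (cn_iter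
                    (1 / \<rho> * sqrt (2 / (2 - \<tau>)) * sqrt (\<mu> / L))
                    ((1 - \<epsilon>) * \<tau> / \<rho> * sqrt (1 / (2 * (2 - \<tau>))) * sqrt (\<mu> / L))
                    (1 / (\<rho> * L))
                    (1 / \<rho> * sqrt ((2 - \<tau>) / (2 * \<mu> * L)))
                    g x0 k \<omega>)) - fstar)) \<partial>cn_space P)
         \<le> ennreal (1 / \<epsilon> * (f x0 - fstar + \<mu> * (norm (x0 - xstar))\<^sup>2))"
proof -
  interpret P: prob_space P
    by (fact P_prob)
  interpret par: cn_parameters L \<mu> \<tau> \<rho> \<epsilon>
    using L_pos mu_pos tau rho eps by unfold_locales
  interpret cn_lyapunov f df P g fstar L \<mu> \<tau> \<rho> xstar par.eta par.eta' par.gamma par.gamma' par.alpha par.B par.D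
    using grad fmin L_pos mu_pos tau rho smooth SQC P_prob g_meas unbiased SGC par.eta_pos par.eta'_pos par.B_pos
      par.D_nonpos par.minus_D_le par.coupling par.step_sizes par.alpha_twice_eta' par.cross_term par.rate_gap
      par.rate_dist par.alpha_lt_1
    by unfold_locales (simp_all add: P.sigma_finite_countable P.emeasure_space_1)
  have "(\<integral>\<^sup>+\<omega>. ennreal (exp (par.alpha * cn_T k \<omega>)
        * (f (fst (cn_iter par.eta par.eta' par.gamma par.gamma' g x0 k \<omega>)) - fstar)) \<partial>cn_space P)
      \<le> ennreal (1 / \<epsilon> * lyap (x0, x0))"
    using par.minus_D_eq eps by (intro nn_integral_gap_cn_iter_le) simp_all
  also have "lyap (x0, x0) \<le> f x0 - fstar + \<mu> * (norm (x0 - xstar))\<^sup>2"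
    using par.B_plus_D_le by (simp add: lyap_def mult_right_mono flip: distrib_right)
  then have "ennreal (1 / \<epsilon> * lyap (x0, x0)) \<le> ennreal (1 / \<epsilon> * (f x0 - fstar + \<mu> * (norm (x0 - xstar))\<^sup>2))"
    using eps by (intro ennreal_leI mult_left_mono) simp_all
  finally show ?thesis
    by (simp only: par.eta_def par.eta'_def par.gamma_def par.gamma'_def par.alpha_def)
qed

end
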